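(* Let $(H,\mathcal P)$ be a hypergraph colouring instance with pinnings, $H=(V,\mathcal E)$ with maximum degree $\Delta$, and let $k'\le k$ be integers with $k'\ge 2$ such that $k'\le|e|\le k$ for every $e\in\mathcal E$. Let $t\ge k$ and $q\ge(\mathrm e t\Delta)^{\frac{1}{k'-1}}$. Then for every $v\in V$ and every colour $c\in[q]$, $$\frac1q\Big(1-\frac1t\Big)\le\Pr_{\sigma\sim\mu_{\mathcal C}}[\sigma(v)=c]\le\frac1q\Big(1+\frac4t\Big).$$
   Context: A hypergraph $H=(V,\mathcal E)$ has finite vertex set $V$ and hyperedges $\mathcal E\subseteq 2^V$; its maximum degree $\Delta$ is the maximum number of hyperedges containing a single vertex. For $q\in\mathbb N$, a hypergraph colouring instance with pinnings is a pair $(H,\mathcal P)$ with $\mathcal P=\{P_e\subseteq[q]:e\in\mathcal E\}$. A colouring $\sigma\in[q]^V$ is proper if $|\{\sigma(u):u\in e\}\cup P_e|>1$ for every $e\in\mathcal E$. $\mathcal C$ is the set of proper colourings and $\mu_{\mathcal C}$ the uniform distribution on $\mathcal C$. $\mathrm e$ denotes Euler's number. *)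

theory Defs
  imports "HOL-Analysis.Analysis" "HOL-Library.FuncSet"
begin

definition max_degree :: "'v set \<Rightarrow> 'v set set \<Rightarrow> nat" where
  "max_degree V E = Max ({card {e \<in> E. v \<in> e} | v. v \<in> V} \<union> {0})"

definition colourings :: "'v set \<Rightarrow> nat \<Rightarrow> ('v \<Rightarrow> nat) set" where
  "colourings V q = (V \<rightarrow>\<^sub>E {1..q})"

definition proper_colourings ::
  "'v set \<Rightarrow> 'v set set \<Rightarrow> ('v set \<Rightarrow> nat set) \<Rightarrow> nat \<Rightarrow> ('v \<Rightarrow> nat) set" where
  "proper_colourings V E P q =
     {\<sigma> \<in> colourings V q. \<forall>e\<in>E. card (\<sigma> ` e \<union> P e) > 1}"

definition marginal ::
  "'v set \<Rightarrow> 'v set set \<Rightarrow> ('v set \<Rightarrow> nat set) \<Rightarrow> nat \<Rightarrow> 'v \<Rightarrow> nat \<Rightarrow> real" where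
  "marginal V E P q v c =
     real (card {\<sigma> \<in> proper_colourings V E P q. \<sigma> v = c}) / real (card (proper_colourings V E P q))"

end

theory Submission
  imports Defs
begin

text \<open>Colour uniformly at random from \<open>[q]\<close>. An edge \<open>e\<close> can only be violated if it is
  monochromatic, which has probability at most \<open>q^(1 - |e|) \<le> 1/(exp 1 * t * \<Delta>)\<close>; since \<open>e\<close>
  meets at most \<open>k (\<Delta> - 1) \<le> t \<Delta> - 1\<close> other edges, the local lemma applies with the uniform
  weight \<open>x = 1/(t \<Delta>)\<close>. In its conditional form it bounds the probability of \<open>\<sigma> v = c\<close>, given
  that all edges are proper, by \<open>(1/q) (1 - x)^(-\<Delta>) \<le> (1/q) / (1 - 1/t)\<close>. For the lower bound,
  drop the at most \<open>\<Delta>\<close> edges at \<open>v\<close>: the remaining constraints are independent of \<open>\<sigma> v\<close>, and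
  restoring a dropped edge \<open>e\<close> removes conditional probability at most
  \<open>exp 1 * q^(-|e|) \<le> 1/(q t \<Delta>)\<close>.\<close>

lemma exp_neg_one_le_power:
  fixes y :: real
  assumes "0 < y" "y < 1" "real n \<le> 1 / y - 1"
  shows "exp (- 1) \<le> (1 - y) ^ n"
proof -
  have "- ln (1 - y) \<le> y / (1 - y)"
    using ln_le_minus_one[of "1 / (1 - y)"] assms(1,2) by (simp add: ln_div field_simps)
  moreover have "real n * (y / (1 - y)) \<le> 1"
    using assms by (simp add: field_simps)
  ultimately have "real n * (- ln (1 - y)) \<le> 1"
    by (meson mult_left_mono of_nat_0_le_iff order_trans)
  then have "exp (- 1) \<le> exp (real n * ln (1 - y))" by simp
  also have "\<dots> = (1 - y) ^ n"
    using assms(2) by (simp add: exp_of_nat_mult)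
  finally show ?thesis .
qed

lemma le_power_of_powr_inverse:
  fixes a b :: real
  assumes "0 < a" "0 < m" "a powr (1 / real m) \<le> b"
  shows "a \<le> b ^ m"
proof -
  have "a = (a powr (1 / real m)) ^ m"
    using assms(1,2) by (simp add: powr_realpow[symmetric] powr_powr)
  also have "\<dots> \<le> b ^ m"
    using assms(3) by (intro power_mono) auto
  finally show ?thesis .
qed

lemma inj_on_restrict_pair:
  "inj_on (\<lambda>s. (restrict s I, restrict s J)) (\<Pi>\<^sub>E i\<in>I \<union> J. B i)"
proof (rule inj_onI)
  fix s s' assume "s \<in> (\<Pi>\<^sub>E i\<in>I \<union> J. B i)" "s' \<in> (\<Pi>\<^sub>E i\<in>I \<union> J. B i)"
    and "(restrict s I, restrict s J) = (restrict s' I, restrict s' J)"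
  then have "merge I J (restrict s I, restrict s J) = merge I J (restrict s' I, restrict s' J)"
    and "restrict s (I \<union> J) = s" "restrict s' (I \<union> J) = s'"
    by auto
  then show "s = s'" by (metis merge_restrict merge_x_x_eq_restrict)
qed

lemma power_mult_le_of_insert_steps:
  fixes f :: "'a set \<Rightarrow> real"
  assumes "finite H" "H \<inter> G0 = {}" "0 \<le> c"
    and step: "\<And>G e. G \<subseteq> G0 \<union> H \<Longrightarrow> e \<in> H \<Longrightarrow> e \<notin> G \<Longrightarrow> c * f G \<le> f (insert e G)"
  shows "c ^ card H * f G0 \<le> f (G0 \<union> H)"
  using assms(1,2) step
proof (induction H rule: finite_induct)
  case empty
  then show ?case by simp
next
  case (insert e H)
  have IH: "c ^ card H * f G0 \<le> f (G0 \<union> H)"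
    using insert.prems(1) by (intro insert.IH) (auto intro: insert.prems(2))
  have "c ^ card (insert e H) * f G0 = c * (c ^ card H * f G0)"
    using insert.hyps by simp
  also have "\<dots> \<le> c * f (G0 \<union> H)"
    using IH \<open>0 \<le> c\<close> by (rule mult_left_mono)
  also have "\<dots> \<le> f (insert e (G0 \<union> H))"
    using insert.prems insert.hyps by (intro insert.prems(2)) auto
  finally show ?case by simp
qed

lemma finite_edges_of_subsets: "finite V \<Longrightarrow> \<forall>e\<in>E. e \<subseteq> V \<Longrightarrow> finite E"
  by (rule rev_finite_subset[of "Pow V"]) auto

definition edge_neighbours :: "'v set set \<Rightarrow> 'v set \<Rightarrow> 'v set set" where
  "edge_neighbours E e = {f \<in> E. f \<noteq> e \<and> f \<inter> e \<noteq> {}}"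

lemma card_edges_at_le_max_degree:
  "finite V \<Longrightarrow> u \<in> V \<Longrightarrow> card {e \<in> E. u \<in> e} \<le> max_degree V E"
  unfolding max_degree_def by (rule Max_ge) auto

lemma card_edge_neighbours_le:
  assumes "finite V" "finite E" "e \<in> E" "e \<subseteq> V"
  shows "card (edge_neighbours E e) \<le> card e * (max_degree V E - 1)"
proof -
  have "finite e" using \<open>e \<subseteq> V\<close> \<open>finite V\<close> by (rule finite_subset)
  have "edge_neighbours E e \<subseteq> (\<Union>u\<in>e. {f \<in> E. u \<in> f} - {e})"
    by (auto simp: edge_neighbours_def)
  then have "card (edge_neighbours E e) \<le> card (\<Union>u\<in>e. {f \<in> E. u \<in> f} - {e})"
    using \<open>finite E\<close> \<open>finite e\<close> by (intro card_mono) auto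
  also have "\<dots> \<le> (\<Sum>u\<in>e. card ({f \<in> E. u \<in> f} - {e}))"
    by (rule card_UN_le[OF \<open>finite e\<close>])
  also have "\<dots> \<le> (\<Sum>u\<in>e. max_degree V E - 1)"
  proof (rule sum_mono)
    fix u assume "u \<in> e"
    then have "card ({f \<in> E. u \<in> f} - {e}) = card {f \<in> E. u \<in> f} - 1"
      using \<open>e \<in> E\<close> \<open>finite E\<close> by (simp add: card_Diff_singleton)
    also have "\<dots> \<le> max_degree V E - 1"
      using card_edges_at_le_max_degree[OF \<open>finite V\<close>, of u E] \<open>u \<in> e\<close> \<open>e \<subseteq> V\<close>
      by (intro diff_le_mono) blast
    finally show "card ({f \<in> E. u \<in> f} - {e}) \<le> max_degree V E - 1" .
  qed
  finally show ?thesis by simp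
qed

section \<open>The uniform distribution on colourings\<close>

locale colouring_space =
  fixes V :: "'v set" and q :: nat
  assumes finite_V: "finite V" and q_pos: "0 < q"
begin

abbreviation \<Omega> :: "('v \<Rightarrow> nat) set" where
  "\<Omega> \<equiv> colourings V q"

definition prob :: "('v \<Rightarrow> nat) set \<Rightarrow> real" where
  "prob S = real (card S) / real (card \<Omega>)"

definition determined_by :: "'v set \<Rightarrow> ('v \<Rightarrow> nat) set \<Rightarrow> bool" where
  "determined_by U S \<longleftrightarrow>
     S \<subseteq> \<Omega> \<and> (\<forall>s\<in>\<Omega>. \<forall>s'\<in>\<Omega>. (\<forall>u\<in>U. s u = s' u) \<longrightarrow> (s \<in> S \<longleftrightarrow> s' \<in> S))"

lemma finite_colourings: "finite \<Omega>"
  unfolding colourings_def by (simp add: finite_PiE finite_V)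

lemma card_colourings: "card \<Omega> = q ^ card V"
  unfolding colourings_def by (simp add: card_PiE finite_V)

lemma card_colourings_pos: "0 < real (card \<Omega>)"
  using q_pos by (simp add: card_colourings)

lemma colouring_outside: "s \<in> \<Omega> \<Longrightarrow> u \<notin> V \<Longrightarrow> s u = undefined"
  unfolding colourings_def by (rule PiE_arb)

lemma colouring_range: "s \<in> \<Omega> \<Longrightarrow> u \<in> V \<Longrightarrow> s u \<in> {1..q}"
  unfolding colourings_def by (rule PiE_mem)

lemma prob_nonneg: "0 \<le> prob S"
  by (simp add: prob_def)

lemma prob_colourings: "prob \<Omega> = 1"
  using card_colourings_pos by (simp add: prob_def)

lemma finite_event: "S \<subseteq> \<Omega> \<Longrightarrow> finite S"
  using finite_colourings by (rule rev_finite_subset)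

lemma prob_mono: "S \<subseteq> T \<Longrightarrow> T \<subseteq> \<Omega> \<Longrightarrow> prob S \<le> prob T"
  unfolding prob_def by (intro divide_right_mono) (simp_all add: card_mono finite_event)

lemma prob_Diff: "S \<subseteq> \<Omega> \<Longrightarrow> prob (S - T) = prob S - prob (S \<inter> T)"
  using card_Int_Diff[OF finite_event, of S T] by (simp add: prob_def add_divide_distrib)

lemma prob_UN_le: "finite I \<Longrightarrow> prob (\<Union>i\<in>I. S i) \<le> (\<Sum>i\<in>I. prob (S i))"
proof -
  assume "finite I"
  then have "real (card (\<Union>i\<in>I. S i)) \<le> (\<Sum>i\<in>I. real (card (S i)))"
    by (metis card_UN_le of_nat_le_iff of_nat_sum)
  then show ?thesis
    using card_colourings_pos by (simp add: prob_def sum_divide_distrib[symmetric] divide_right_mono)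
qed

lemma prob_Un_le: "prob (S \<union> T) \<le> prob S + prob T"
  using prob_UN_le[of "{True, False}" "\<lambda>b. if b then S else T"] by (simp add: Un_commute)

lemma determined_by_subset: "determined_by U S \<Longrightarrow> S \<subseteq> \<Omega>"
  by (simp add: determined_by_def)

lemma determined_by_colourings: "determined_by U \<Omega>"
  by (simp add: determined_by_def)

lemma determined_by_mono: "determined_by U S \<Longrightarrow> U \<subseteq> U' \<Longrightarrow> determined_by U' S"
  unfolding determined_by_def by blast

lemma determined_by_Int: "determined_by U S \<Longrightarrow> determined_by U T \<Longrightarrow> determined_by U (S \<inter> T)"
  unfolding determined_by_def by blast

lemma determined_by_Int_V: "determined_by U S \<Longrightarrow> determined_by (U \<inter> V) S"
  unfolding determined_by_def by (metis IntI colouring_outside)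

lemma determined_by_restrict_eq:
  "determined_by U S \<Longrightarrow> s' \<in> S \<Longrightarrow> s \<in> \<Omega> \<Longrightarrow> restrict s U = restrict s' U \<Longrightarrow> s \<in> S"
  unfolding determined_by_def by (metis restrict_apply' subsetD)

lemma image_restrict_pair_Int:
  assumes S: "determined_by U S" and T: "determined_by (V - U) T" and "U \<subseteq> V"
  shows "(\<lambda>s. (restrict s U, restrict s (V - U))) ` (S \<inter> T)
    = (\<lambda>s. restrict s U) ` S \<times> (\<lambda>s. restrict s (V - U)) ` T"
proof (intro equalityI subsetI)
  fix p assume "p \<in> (\<lambda>s. restrict s U) ` S \<times> (\<lambda>s. restrict s (V - U)) ` T"
  then obtain s1 s2 where s1: "s1 \<in> S" and s2: "s2 \<in> T"
    and p: "p = (restrict s1 U, restrict s2 (V - U))" by blast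
  define s where "s = merge U (V - U) (s1, s2)"
  have UV: "U \<union> (V - U) = V" using \<open>U \<subseteq> V\<close> by blast
  have "s1 \<in> Pi U (\<lambda>_. {1..q})" "s2 \<in> Pi (V - U) (\<lambda>_. {1..q})"
    using determined_by_subset[OF S] determined_by_subset[OF T] s1 s2 colouring_range \<open>U \<subseteq> V\<close>
    by blast+
  then have "s \<in> (\<Pi>\<^sub>E u\<in>U \<union> (V - U). {1..q})"
    unfolding s_def by (intro iffD2[OF PiE_cancel_merge]) auto
  then have "s \<in> \<Omega>" unfolding colourings_def UV .
  have "restrict s U = restrict s1 U" "restrict s (V - U) = restrict s2 (V - U)"
    by (simp_all add: s_def)
  then have "s \<in> S \<inter> T"
    using determined_by_restrict_eq[OF S s1 \<open>s \<in> \<Omega>\<close>]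
      determined_by_restrict_eq[OF T s2 \<open>s \<in> \<Omega>\<close>] by blast
  then show "p \<in> (\<lambda>s. (restrict s U, restrict s (V - U))) ` (S \<inter> T)"
    unfolding p using \<open>restrict s U = restrict s1 U\<close> \<open>restrict s (V - U) = restrict s2 (V - U)\<close>
    by (intro image_eqI[of _ _ s]) simp_all
qed auto

text \<open>Restriction to \<open>U \<inter> V\<close> and to its complement in \<open>V\<close> is a bijection from \<open>\<Omega>\<close> onto a
  product, under which events determined by disjoint sets become rectangles.\<close>

lemma prob_Int_independent:
  assumes S: "determined_by U S" and T: "determined_by W T" and "U \<inter> W = {}"
  shows "prob (S \<inter> T) = prob S * prob T"
proof -
  define U' where "U' = U \<inter> V"
  define split where "split = (\<lambda>s :: 'v \<Rightarrow> nat. (restrict s U', restrict s (V - U')))"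
  have S': "determined_by U' S" unfolding U'_def by (rule determined_by_Int_V[OF S])
  have T': "determined_by (V - U') T"
    by (rule determined_by_mono[OF determined_by_Int_V[OF T]]) (use \<open>U \<inter> W = {}\<close> in \<open>auto simp: U'_def\<close>)
  have UV: "U' \<union> (V - U') = V" by (auto simp: U'_def)
  have inj: "inj_on split \<Omega>"
    using inj_on_restrict_pair[of U' "V - U'" "\<lambda>_. {1..q}"] unfolding UV split_def colourings_def .
  have card_Int: "card (A \<inter> B) = card ((\<lambda>s. restrict s U') ` A) * card ((\<lambda>s. restrict s (V - U')) ` B)"
    if A: "determined_by U' A" and B: "determined_by (V - U') B" for A B
  proof -
    have "A \<inter> B \<subseteq> \<Omega>" using determined_by_subset[OF A] by blast
    then have "card (A \<inter> B) = card (split ` (A \<inter> B))"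
      by (intro card_image[symmetric] inj_on_subset[OF inj])
    also have "split ` (A \<inter> B) = (\<lambda>s. restrict s U') ` A \<times> (\<lambda>s. restrict s (V - U')) ` B"
      unfolding split_def by (rule image_restrict_pair_Int[OF A B]) (simp add: U'_def)
    finally show ?thesis by (simp only: card_cartesian_product)
  qed
  have \<Omega>: "determined_by U' \<Omega>" "determined_by (V - U') \<Omega>"
    by (rule determined_by_colourings)+
  have "card (S \<inter> T) * card (\<Omega> \<inter> \<Omega>) = card (S \<inter> \<Omega>) * card (\<Omega> \<inter> T)"
    unfolding card_Int[OF S' T'] card_Int[OF S' \<Omega>(2)] card_Int[OF \<Omega>(1) T'] card_Int[OF \<Omega>]
    by (simp only: ac_simps)
  moreover have "S \<inter> \<Omega> = S" "\<Omega> \<inter> T = T"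
    using determined_by_subset[OF S] determined_by_subset[OF T] by blast+
  ultimately have "card (S \<inter> T) * card \<Omega> = card S * card T" by simp
  then have "real (card (S \<inter> T)) * real (card \<Omega>) = real (card S) * real (card T)"
    by (metis of_nat_mult)
  then show ?thesis
    using card_colourings_pos unfolding prob_def by (simp add: field_simps)
qed

definition violated :: "('v set \<Rightarrow> nat set) \<Rightarrow> 'v set \<Rightarrow> ('v \<Rightarrow> nat) set" where
  "violated P e = {s \<in> \<Omega>. card (s ` e \<union> P e) \<le> 1}"

definition proper_on :: "('v set \<Rightarrow> nat set) \<Rightarrow> 'v set set \<Rightarrow> ('v \<Rightarrow> nat) set" where
  "proper_on P F = {s \<in> \<Omega>. \<forall>e\<in>F. s \<notin> violated P e}"

lemma violated_subset: "violated P e \<subseteq> \<Omega>"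
  by (auto simp: violated_def)

lemma proper_on_subset: "proper_on P F \<subseteq> \<Omega>"
  by (auto simp: proper_on_def)

lemma proper_on_empty: "proper_on P {} = \<Omega>"
  by (auto simp: proper_on_def)

lemma proper_on_insert: "proper_on P (insert e F) = proper_on P F - violated P e"
  by (auto simp: proper_on_def)

lemma proper_on_antimono: "G \<subseteq> F \<Longrightarrow> proper_on P F \<subseteq> proper_on P G"
  by (auto simp: proper_on_def)

lemma determined_by_violated: "determined_by e (violated P e)"
  unfolding determined_by_def violated_def by (auto cong: image_cong)

lemma determined_by_proper_on: "determined_by (\<Union>F) (proper_on P F)"
  unfolding determined_by_def proper_on_def violated_def by (auto cong: image_cong)

definition monochromatic :: "'v set \<Rightarrow> nat \<Rightarrow> ('v \<Rightarrow> nat) set" where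
  "monochromatic e a = {s \<in> \<Omega>. \<forall>u\<in>e. s u = a}"

lemma monochromatic_eq_PiE:
  assumes "e \<subseteq> V" "a \<in> {1..q}"
  shows "monochromatic e a = (\<Pi>\<^sub>E u\<in>V. if u \<in> e then {a} else {1..q})"
proof (intro equalityI subsetI)
  fix s assume "s \<in> monochromatic e a"
  then show "s \<in> (\<Pi>\<^sub>E u\<in>V. if u \<in> e then {a} else {1..q})"
    unfolding monochromatic_def colourings_def by (auto simp: PiE_iff)
next
  fix s assume s: "s \<in> (\<Pi>\<^sub>E u\<in>V. if u \<in> e then {a} else {1..q})"
  then have "s \<in> \<Omega>"
    using \<open>a \<in> {1..q}\<close> unfolding colourings_def by (auto simp: PiE_iff split: if_splits)
  moreover have "\<forall>u\<in>e. s u = a"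
  proof
    fix u assume "u \<in> e"
    then have "s u \<in> (if u \<in> e then {a} else {1..q})" using s \<open>e \<subseteq> V\<close> by blast
    then show "s u = a" using \<open>u \<in> e\<close> by simp
  qed
  ultimately show "s \<in> monochromatic e a" by (simp add: monochromatic_def)
qed

lemma prob_monochromatic:
  assumes "e \<subseteq> V" "a \<in> {1..q}"
  shows "prob (monochromatic e a) = 1 / real q ^ card e"
proof -
  have "card (monochromatic e a) = (\<Prod>u\<in>V. if u \<in> e then 1 else q)"
    unfolding monochromatic_eq_PiE[OF assms] card_PiE[OF finite_V]
    by (rule prod.cong) auto
  also have "\<dots> = q ^ card (V - e)"
    using finite_V by (simp add: prod.If_cases Diff_eq)
  finally have "real (card (monochromatic e a)) * real q ^ card e = real q ^ card V"
    using \<open>e \<subseteq> V\<close> finite_V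
    by (simp add: card_Diff_subset card_mono finite_subset power_add[symmetric])
  then show ?thesis
    using q_pos by (simp add: prob_def card_colourings field_simps)
qed

lemma violated_imp_constant:
  assumes "s \<in> violated P e" "finite e" "finite (P e)" "u \<in> e" "u' \<in> e"
  shows "s u = s u'"
proof -
  have "card (s ` e \<union> P e) \<le> 1" using assms(1) by (simp add: violated_def)
  then show ?thesis
    using assms(2-5) by (auto simp: card_le_Suc0_iff_eq)
qed

lemma violated_subset_monochromatic:
  assumes "e \<subseteq> V" "e \<noteq> {}" "finite (P e)"
  shows "violated P e \<subseteq> (\<Union>a\<in>{1..q}. monochromatic e a)"
proof
  fix s assume s: "s \<in> violated P e"
  obtain u where "u \<in> e" using \<open>e \<noteq> {}\<close> by blast
  have "finite e" using \<open>e \<subseteq> V\<close> finite_V by (rule finite_subset)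
  have "s \<in> \<Omega>" using s violated_subset by blast
  then have "s u \<in> {1..q}" using \<open>u \<in> e\<close> \<open>e \<subseteq> V\<close> colouring_range by blast
  moreover have "s \<in> monochromatic e (s u)"
    using \<open>s \<in> \<Omega>\<close> violated_imp_constant[OF s \<open>finite e\<close> \<open>finite (P e)\<close> _ \<open>u \<in> e\<close>]
    by (simp add: monochromatic_def)
  ultimately show "s \<in> (\<Union>a\<in>{1..q}. monochromatic e a)" by blast
qed

lemma prob_violated_le:
  assumes "e \<subseteq> V" "e \<noteq> {}" "finite (P e)"
  shows "prob (violated P e) \<le> real q / real q ^ card e"
proof -
  have "prob (violated P e) \<le> prob (\<Union>a\<in>{1..q}. monochromatic e a)"
    using violated_subset_monochromatic[of e P, OF assms] by (rule prob_mono) (auto simp: monochromatic_def)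
  also have "\<dots> \<le> (\<Sum>a\<in>{1..q}. prob (monochromatic e a))"
    by (rule prob_UN_le) simp
  also have "\<dots> = real q / real q ^ card e"
    using prob_monochromatic[OF \<open>e \<subseteq> V\<close>] by simp
  finally show ?thesis .
qed

lemma colour_Int_violated_subset:
  assumes "v \<in> e" "e \<subseteq> V" "finite (P e)"
  shows "{s \<in> \<Omega>. s v = c} \<inter> violated P e \<subseteq> monochromatic e c"
  using violated_imp_constant[of _ P e] assms finite_subset[OF \<open>e \<subseteq> V\<close> finite_V]
  by (auto simp: monochromatic_def)

lemma determined_by_colour: "determined_by {v} {s \<in> \<Omega>. s v = c}"
  unfolding determined_by_def by auto

lemma marginal_eq:
  "marginal V E P q v c = prob ({s \<in> \<Omega>. s v = c} \<inter> proper_on P E) / prob (proper_on P E)"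
proof -
  have "proper_colourings V E P q = proper_on P E"
    by (auto simp: proper_colourings_def proper_on_def violated_def)
  moreover have "{s \<in> proper_on P E. s v = c} = {s \<in> \<Omega>. s v = c} \<inter> proper_on P E"
    using proper_on_subset by blast
  ultimately show ?thesis
    using card_colourings_pos by (simp add: marginal_def prob_def)
qed

lemma prob_colour:
  assumes "v \<in> V" "c \<in> {1..q}"
  shows "prob {s \<in> \<Omega>. s v = c} = 1 / real q"
proof -
  have "{s \<in> \<Omega>. s v = c} = monochromatic {v} c" by (simp add: monochromatic_def)
  then show ?thesis using prob_monochromatic[of "{v}" c] assms by simp
qed

end

section \<open>The local lemma with uniform weights\<close>

locale local_lemma = colouring_space V q for V :: "'v set" and q +
  fixes E :: "'v set set" and P :: "'v set \<Rightarrow> nat set" and x :: real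
  assumes edges_subset: "\<forall>e\<in>E. e \<subseteq> V"
    and x_nonneg: "0 \<le> x" and x_less_1: "x < 1"
    and prob_violated_bound:
      "\<And>e. e \<in> E \<Longrightarrow> prob (violated P e) \<le> x * (1 - x) ^ card (edge_neighbours E e)"
begin

lemma finite_edges: "finite E"
  using finite_V edges_subset by (rule finite_edges_of_subsets)

lemma prob_proper_on_insert_ge:
  assumes "G \<subseteq> E" "e \<in> E" "e \<notin> G"
    and bound: "prob (violated P e \<inter> proper_on P G) * (1 - x) ^ card {f \<in> G. f \<inter> e \<noteq> {}}
      \<le> prob (violated P e) * prob (proper_on P G)"
  shows "(1 - x) * prob (proper_on P G) \<le> prob (proper_on P (insert e G))"
proof -
  let ?m = "card {f \<in> G. f \<inter> e \<noteq> {}}"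
  have "{f \<in> G. f \<inter> e \<noteq> {}} \<subseteq> edge_neighbours E e"
    using assms(1,3) by (auto simp: edge_neighbours_def)
  then have "?m \<le> card (edge_neighbours E e)"
    using finite_edges by (intro card_mono) (auto simp: edge_neighbours_def)
  then have "(1 - x) ^ card (edge_neighbours E e) \<le> (1 - x) ^ ?m"
    using x_nonneg x_less_1 by (intro power_decreasing) auto
  then have "prob (violated P e) \<le> x * (1 - x) ^ ?m"
    using prob_violated_bound[OF \<open>e \<in> E\<close>] mult_left_mono[OF _ x_nonneg] by (meson order_trans)
  then have "prob (violated P e) * prob (proper_on P G) \<le> x * (1 - x) ^ ?m * prob (proper_on P G)"
    by (rule mult_right_mono[OF _ prob_nonneg])
  then have "prob (violated P e \<inter> proper_on P G) * (1 - x) ^ ?m \<le> (x * prob (proper_on P G)) * (1 - x) ^ ?m"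
    using bound by (simp only: ac_simps)
  then have "prob (violated P e \<inter> proper_on P G) \<le> x * prob (proper_on P G)"
    by (rule mult_right_le_imp_le) (simp add: x_less_1)
  moreover have "prob (proper_on P (insert e G))
      = prob (proper_on P G) - prob (violated P e \<inter> proper_on P G)"
    unfolding proper_on_insert prob_Diff[OF proper_on_subset] by (simp only: Int_commute)
  moreover have "(1 - x) * prob (proper_on P G) = prob (proper_on P G) - x * prob (proper_on P G)"
    by (simp add: left_diff_distrib)
  ultimately show ?thesis by linarith
qed

text \<open>Edges of \<open>F\<close> disjoint from the support of \<open>A\<close> define an event independent of \<open>A\<close>; adding
  back the remaining edges one at a time costs a factor \<open>1 - x\<close> each.\<close>

lemma prob_Int_proper_on_le_of_steps:
  assumes "F \<subseteq> E" "determined_by U A"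
    and steps: "\<And>G e. G \<subseteq> F \<Longrightarrow> e \<in> F \<Longrightarrow> e \<notin> G
      \<Longrightarrow> (1 - x) * prob (proper_on P G) \<le> prob (proper_on P (insert e G))"
  shows "prob (A \<inter> proper_on P F) * (1 - x) ^ card {e \<in> F. e \<inter> U \<noteq> {}}
    \<le> prob A * prob (proper_on P F)"
proof -
  define F1 where "F1 = {e \<in> F. e \<inter> U \<noteq> {}}"
  define F2 where "F2 = F - F1"
  have "finite F1"
    using finite_edges \<open>F \<subseteq> E\<close> unfolding F1_def by (auto intro: rev_finite_subset)
  have F: "F2 \<union> F1 = F" by (auto simp: F1_def F2_def)
  have "(1 - x) ^ card F1 * prob (proper_on P F2) \<le> prob (proper_on P (F2 \<union> F1))"
    by (rule power_mult_le_of_insert_steps[OF \<open>finite F1\<close>]) (use x_less_1 steps in \<open>auto simp: F1_def F2_def\<close>)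
  then have chain: "(1 - x) ^ card F1 * prob (proper_on P F2) \<le> prob (proper_on P F)"
    unfolding F .
  have "U \<inter> \<Union>F2 = {}" by (auto simp: F1_def F2_def)
  then have indep: "prob (A \<inter> proper_on P F2) = prob A * prob (proper_on P F2)"
    by (rule prob_Int_independent[OF \<open>determined_by U A\<close> determined_by_proper_on])
  have "prob (A \<inter> proper_on P F) \<le> prob (A \<inter> proper_on P F2)"
    using proper_on_antimono[of F2 F P] proper_on_subset[of P F2]
    by (intro prob_mono) (auto simp: F2_def)
  then have "prob (A \<inter> proper_on P F) * (1 - x) ^ card F1
      \<le> prob A * ((1 - x) ^ card F1 * prob (proper_on P F2))"
    using x_less_1 indep by (simp add: mult_right_mono mult.commute mult.left_commute)
  also have "\<dots> \<le> prob A * prob (proper_on P F)"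
    using chain prob_nonneg by (rule mult_left_mono)
  finally show ?thesis unfolding F1_def .
qed

lemma local_lemma_bounds:
  "F \<subseteq> E \<Longrightarrow> 0 < prob (proper_on P F) \<and>
    (\<forall>U A. determined_by U A \<longrightarrow> prob (A \<inter> proper_on P F) * (1 - x) ^ card {e \<in> F. e \<inter> U \<noteq> {}}
      \<le> prob A * prob (proper_on P F))"
proof (induction "card F" arbitrary: F rule: less_induct)
  case less
  have steps: "(1 - x) * prob (proper_on P G) \<le> prob (proper_on P (insert e G))
      \<and> 0 < prob (proper_on P G)"
    if "G \<subseteq> F" "e \<in> F" "e \<notin> G" for G e
  proof -
    have "finite F" using finite_edges less.prems by (rule rev_finite_subset)
    moreover have "G \<subset> F" using that by blast
    ultimately have "card G < card F" by (rule psubset_card_mono)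
    then have IH: "0 < prob (proper_on P G) \<and> (\<forall>U A. determined_by U A \<longrightarrow>
        prob (A \<inter> proper_on P G) * (1 - x) ^ card {f \<in> G. f \<inter> U \<noteq> {}} \<le> prob A * prob (proper_on P G))"
      using less that by auto
    then show ?thesis
      using prob_proper_on_insert_ge that less.prems determined_by_violated by blast
  qed
  have pos: "0 < prob (proper_on P F)"
  proof (cases "F = {}")
    case True
    then show ?thesis by (simp add: proper_on_empty prob_colourings)
  next
    case False
    then obtain e where "e \<in> F" by blast
    then have "0 < (1 - x) * prob (proper_on P (F - {e}))"
      using steps[of "F - {e}" e] x_less_1 by simp
    also have "\<dots> \<le> prob (proper_on P F)"
      using steps[of "F - {e}" e] \<open>e \<in> F\<close> by (simp add: insert_absorb)
    finally show ?thesis .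
  qed
  show ?case
    using pos prob_Int_proper_on_le_of_steps[OF less.prems] steps by blast
qed

lemma prob_proper_on_pos: "F \<subseteq> E \<Longrightarrow> 0 < prob (proper_on P F)"
  using local_lemma_bounds by blast

lemma prob_Int_proper_on_le:
  "F \<subseteq> E \<Longrightarrow> determined_by U A
    \<Longrightarrow> prob (A \<inter> proper_on P F) * (1 - x) ^ card {e \<in> F. e \<inter> U \<noteq> {}} \<le> prob A * prob (proper_on P F)"
  using local_lemma_bounds by blast

lemma prob_Int_violated_proper_on_le:
  assumes "e \<in> E" "v \<in> e" "determined_by {v} A"
  shows "prob (A \<inter> violated P e \<inter> proper_on P {f \<in> E. v \<notin> f}) * (1 - x) ^ card (edge_neighbours E e)
    \<le> prob (A \<inter> violated P e) * prob (proper_on P {f \<in> E. v \<notin> f})"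
proof -
  let ?F = "{f \<in> E. v \<notin> f}"
  let ?m = "card {f \<in> ?F. f \<inter> e \<noteq> {}}"
  have "determined_by e (A \<inter> violated P e)"
    using \<open>v \<in> e\<close> determined_by_mono[OF \<open>determined_by {v} A\<close>] determined_by_violated
    by (intro determined_by_Int) auto
  then have main: "prob (A \<inter> violated P e \<inter> proper_on P ?F) * (1 - x) ^ ?m
      \<le> prob (A \<inter> violated P e) * prob (proper_on P ?F)"
    by (intro prob_Int_proper_on_le) auto
  have "{f \<in> ?F. f \<inter> e \<noteq> {}} \<subseteq> edge_neighbours E e"
    using \<open>v \<in> e\<close> by (auto simp: edge_neighbours_def)
  then have "?m \<le> card (edge_neighbours E e)"
    using finite_edges by (intro card_mono) (auto simp: edge_neighbours_def)
  then have "(1 - x) ^ card (edge_neighbours E e) \<le> (1 - x) ^ ?m"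
    using x_nonneg x_less_1 by (intro power_decreasing) auto
  then have "prob (A \<inter> violated P e \<inter> proper_on P ?F) * (1 - x) ^ card (edge_neighbours E e)
      \<le> prob (A \<inter> violated P e \<inter> proper_on P ?F) * (1 - x) ^ ?m"
    by (rule mult_left_mono[OF _ prob_nonneg])
  with main show ?thesis by linarith
qed

text \<open>Removing the edges at \<open>v\<close> makes \<open>A\<close> independent of the remaining constraints; each
  removed edge can only exclude colourings in which it is violated.\<close>

lemma prob_Int_proper_on_ge:
  assumes "determined_by {v} A"
  shows "prob A * prob (proper_on P {f \<in> E. v \<notin> f})
      - (\<Sum>e\<in>{e \<in> E. v \<in> e}. prob (A \<inter> violated P e \<inter> proper_on P {f \<in> E. v \<notin> f}))
    \<le> prob (A \<inter> proper_on P E)"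
proof -
  let ?C = "proper_on P {f \<in> E. v \<notin> f}"
  let ?B = "\<lambda>e. A \<inter> violated P e \<inter> ?C"
  have "{v} \<inter> \<Union>{f \<in> E. v \<notin> f} = {}" by blast
  then have indep: "prob (A \<inter> ?C) = prob A * prob ?C"
    by (rule prob_Int_independent[OF assms determined_by_proper_on])
  have "A \<inter> ?C \<subseteq> (A \<inter> proper_on P E) \<union> (\<Union>e\<in>{e \<in> E. v \<in> e}. ?B e)"
    by (auto simp: proper_on_def)
  then have "prob (A \<inter> ?C) \<le> prob ((A \<inter> proper_on P E) \<union> (\<Union>e\<in>{e \<in> E. v \<in> e}. ?B e))"
    by (rule prob_mono) (use proper_on_subset in blast)
  also have "\<dots> \<le> prob (A \<inter> proper_on P E) + prob (\<Union>e\<in>{e \<in> E. v \<in> e}. ?B e)"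
    by (rule prob_Un_le)
  also have "\<dots> \<le> prob (A \<inter> proper_on P E) + (\<Sum>e\<in>{e \<in> E. v \<in> e}. prob (?B e))"
    using finite_edges by (intro add_left_mono prob_UN_le) simp
  finally show ?thesis using indep by linarith
qed

end

section \<open>Marginals of pinned hypergraph colourings\<close>

locale pinned_hypergraph = colouring_space V q for V :: "'v set" and q +
  fixes E :: "'v set set" and P :: "'v set \<Rightarrow> nat set" and k k' :: nat and t :: real
  assumes edges_in_V: "\<forall>e\<in>E. e \<subseteq> V"
    and pinnings_in_colours: "\<forall>e\<in>E. P e \<subseteq> {1..q}"
    and two_le_k': "2 \<le> k'" and k'_le_k: "k' \<le> k"
    and edge_sizes: "\<forall>e\<in>E. k' \<le> card e \<and> card e \<le> k"
    and k_le_t: "real k \<le> t"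
    and many_colours: "real q \<ge> (exp 1 * t * real (max_degree V E)) powr (1 / (real k' - 1))"
begin

text \<open>\<open>D\<close> is the maximum degree \<open>\<Delta>\<close>, raised to \<open>1\<close> when \<open>E = {}\<close>; \<open>x\<close> is the local-lemma weight
  of every edge.\<close>

definition D :: real where
  "D = real (max 1 (max_degree V E))"

definition x :: real where
  "x = 1 / (t * D)"

lemma two_le_t: "2 \<le> t"
  using two_le_k' k'_le_k k_le_t by linarith

lemma one_le_D: "1 \<le> D"
  by (simp add: D_def)

lemma two_le_tD: "2 \<le> t * D"
  using mult_mono[OF two_le_t one_le_D] two_le_t by simp

lemma x_pos: "0 < x" and x_lt_1: "x < 1"
  using two_le_tD by (simp_all add: x_def)

lemma card_edges_at_le_D: "u \<in> V \<Longrightarrow> real (card {e \<in> E. u \<in> e}) \<le> D"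
  using card_edges_at_le_max_degree[OF finite_V, of u E] by (simp add: D_def le_max_iff_disj)

lemma D_eq_max_degree:
  assumes "e \<in> E"
  shows "D = real (max_degree V E)"
proof -
  have "card e \<ge> 2" using edge_sizes assms two_le_k' by force
  then obtain u where "u \<in> e" by fastforce
  then have "u \<in> V" using edges_in_V assms by blast
  have "0 < card {f \<in> E. u \<in> f}"
    using finite_edges_of_subsets[OF finite_V edges_in_V] assms \<open>u \<in> e\<close> by (auto simp: card_gt_0_iff)
  then have "1 \<le> max_degree V E"
    using card_edges_at_le_max_degree[OF finite_V \<open>u \<in> V\<close>, of E] by linarith
  then show ?thesis by (simp add: D_def)
qed

lemma card_edge_neighbours_le_D:
  assumes "e \<in> E"
  shows "real (card (edge_neighbours E e)) \<le> t * D - 1"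
proof -
  have "card (edge_neighbours E e) \<le> k * (max_degree V E - 1)"
    using card_edge_neighbours_le[OF finite_V finite_edges_of_subsets[OF finite_V edges_in_V] assms]
      edges_in_V edge_sizes assms
    by (meson mult_le_mono1 order_trans)
  then have "real (card (edge_neighbours E e)) \<le> real (k * (max_degree V E - 1))"
    by (simp only: of_nat_le_iff)
  also have "\<dots> = real k * (D - 1)"
    using D_eq_max_degree[OF assms] one_le_D by (simp add: of_nat_diff)
  also have "\<dots> \<le> t * D - 1"
  proof -
    have "real k * D \<le> t * D" using k_le_t one_le_D by (intro mult_right_mono) auto
    moreover have "1 \<le> real k" using two_le_k' k'_le_k by simp
    ultimately show ?thesis by (simp add: right_diff_distrib)
  qed
  finally show ?thesis .
qed

lemma exp_neg_one_le: "real n \<le> t * D - 1 \<Longrightarrow> exp (- 1) \<le> (1 - x) ^ n"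
  using exp_neg_one_le_power[OF x_pos x_lt_1] by (simp add: x_def)

lemma exp_t_D_le_power:
  assumes "e \<in> E"
  shows "exp 1 * t * D \<le> real q ^ (card e - 1)"
proof -
  have "exp 1 * t * D \<le> real q ^ (k' - 1)"
    using two_le_k' two_le_t one_le_D many_colours D_eq_max_degree[OF assms]
    by (intro le_power_of_powr_inverse) (simp_all add: of_nat_diff)
  also have "\<dots> \<le> real q ^ (card e - 1)"
    using q_pos edge_sizes assms by (intro power_increasing) auto
  finally show ?thesis .
qed

lemma power_card_edge: "e \<in> E \<Longrightarrow> real q ^ card e = real q * real q ^ (card e - 1)"
  using edge_sizes two_le_k' by (metis Suc_diff_1 le_trans not_numeral_le_zero not_gr0 power_Suc)

sublocale local_lemma V q E P x
proof
  show "\<forall>e\<in>E. e \<subseteq> V" using edges_in_V .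
  show "0 \<le> x" "x < 1" using x_pos x_lt_1 by auto
next
  fix e assume "e \<in> E"
  have "e \<noteq> {}" using edge_sizes \<open>e \<in> E\<close> two_le_k' by force
  moreover have "finite (P e)" using pinnings_in_colours \<open>e \<in> E\<close> finite_subset by blast
  ultimately have "prob (violated P e) \<le> real q / real q ^ card e"
    using edges_in_V \<open>e \<in> E\<close> prob_violated_le by blast
  also have "\<dots> = 1 / real q ^ (card e - 1)"
    using power_card_edge[OF \<open>e \<in> E\<close>] q_pos by simp
  also have "\<dots> \<le> 1 / (exp 1 * t * D)"
    using exp_t_D_le_power[OF \<open>e \<in> E\<close>] two_le_t one_le_D q_pos
    by (intro divide_left_mono mult_pos_pos) auto
  also have "\<dots> = x * exp (- 1)"
    by (simp add: x_def exp_minus field_simps)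
  also have "\<dots> \<le> x * (1 - x) ^ card (edge_neighbours E e)"
    using exp_neg_one_le[OF card_edge_neighbours_le_D[OF \<open>e \<in> E\<close>]] x_pos by simp
  finally show "prob (violated P e) \<le> x * (1 - x) ^ card (edge_neighbours E e)" .
qed

lemma prob_colour_violated_le:
  assumes "e \<in> E" "v \<in> e" "c \<in> {1..q}"
  shows "prob ({s \<in> \<Omega>. s v = c} \<inter> violated P e) \<le> 1 / (real q * (exp 1 * t * D))"
proof -
  have "e \<subseteq> V" using edges_in_V assms(1) by blast
  have "finite (P e)" using pinnings_in_colours assms(1) finite_subset by blast
  have "prob ({s \<in> \<Omega>. s v = c} \<inter> violated P e) \<le> prob (monochromatic e c)"
    using colour_Int_violated_subset[of v e P c, OF \<open>v \<in> e\<close> \<open>e \<subseteq> V\<close> \<open>finite (P e)\<close>]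
    by (rule prob_mono) (auto simp: monochromatic_def)
  also have "\<dots> = 1 / (real q * real q ^ (card e - 1))"
    using prob_monochromatic[OF \<open>e \<subseteq> V\<close> \<open>c \<in> {1..q}\<close>] power_card_edge[OF \<open>e \<in> E\<close>] by simp
  also have "\<dots> \<le> 1 / (real q * (exp 1 * t * D))"
    using exp_t_D_le_power[OF \<open>e \<in> E\<close>] two_le_t one_le_D q_pos
    by (intro divide_left_mono mult_left_mono mult_pos_pos) auto
  finally show ?thesis .
qed

lemma prob_colour_violated_proper_on_le:
  assumes "e \<in> E" "v \<in> e" "c \<in> {1..q}"
  shows "prob ({s \<in> \<Omega>. s v = c} \<inter> violated P e \<inter> proper_on P {f \<in> E. v \<notin> f})
    \<le> prob (proper_on P {f \<in> E. v \<notin> f}) / (real q * t * D)"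
proof -
  let ?A = "{s \<in> \<Omega>. s v = c}" and ?C = "proper_on P {f \<in> E. v \<notin> f}"
  have "prob (?A \<inter> violated P e \<inter> ?C) * exp (- 1)
      \<le> prob (?A \<inter> violated P e \<inter> ?C) * (1 - x) ^ card (edge_neighbours E e)"
    using exp_neg_one_le[OF card_edge_neighbours_le_D[OF \<open>e \<in> E\<close>]] by (rule mult_left_mono[OF _ prob_nonneg])
  also have "\<dots> \<le> prob (?A \<inter> violated P e) * prob ?C"
    using assms(1,2) determined_by_colour by (rule prob_Int_violated_proper_on_le)
  also have "\<dots> \<le> 1 / (real q * (exp 1 * t * D)) * prob ?C"
    using prob_colour_violated_le[OF assms] by (rule mult_right_mono[OF _ prob_nonneg])
  also have "\<dots> = prob ?C / (real q * t * D) * exp (- 1)"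
    by (simp add: exp_minus divide_inverse)
  finally show ?thesis by (rule mult_right_le_imp_le) simp
qed

lemma one_minus_inverse_t_le_power:
  assumes "u \<in> V"
  shows "1 - 1 / t \<le> (1 - x) ^ card {e \<in> E. u \<in> e}"
proof -
  let ?n = "card {e \<in> E. u \<in> e}"
  have "real ?n * x \<le> D * x"
    using card_edges_at_le_D[OF assms] x_pos by (intro mult_right_mono) auto
  then have "1 - 1 / t \<le> 1 + real ?n * (- x)"
    using two_le_t one_le_D by (simp add: x_def)
  also have "\<dots> \<le> (1 + (- x)) ^ ?n"
    using x_lt_1 by (intro Bernoulli_inequality) simp
  finally show ?thesis by simp
qed

lemma marginal_mult_le:
  assumes "v \<in> V" "c \<in> {1..q}"
  shows "marginal V E P q v c * (1 - 1 / t) \<le> 1 / real q"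
proof -
  let ?A = "{s \<in> \<Omega>. s v = c}" and ?C = "proper_on P E" and ?n = "card {e \<in> E. v \<in> e}"
  have "{e \<in> E. e \<inter> {v} \<noteq> {}} = {e \<in> E. v \<in> e}" by blast
  then have conditioned: "prob (?A \<inter> ?C) * (1 - x) ^ ?n \<le> 1 / real q * prob ?C"
    using prob_Int_proper_on_le[OF subset_refl determined_by_colour, of v c] prob_colour[OF assms]
    by simp
  have "prob (?A \<inter> ?C) * (1 - 1 / t) \<le> prob (?A \<inter> ?C) * (1 - x) ^ ?n"
    using one_minus_inverse_t_le_power[OF \<open>v \<in> V\<close>] by (rule mult_left_mono[OF _ prob_nonneg])
  with conditioned have "prob (?A \<inter> ?C) * (1 - 1 / t) \<le> 1 / real q * prob ?C"
    by linarith
  then have "prob (?A \<inter> ?C) * (1 - 1 / t) / prob ?C \<le> 1 / real q * prob ?C / prob ?C"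
    using prob_proper_on_pos[OF subset_refl] by (intro divide_right_mono) auto
  then show ?thesis
    using prob_proper_on_pos[OF subset_refl] by (simp add: marginal_eq)
qed

lemma marginal_le:
  assumes "v \<in> V" "c \<in> {1..q}"
  shows "marginal V E P q v c \<le> 1 / real q * (1 + 4 / t)"
proof -
  let ?m = "marginal V E P q v c"
  have "1 \<le> (1 - 1 / t) * (1 + 4 / t)"
    using two_le_t by (simp add: field_simps)
  then have "?m * 1 \<le> ?m * ((1 - 1 / t) * (1 + 4 / t))"
    using prob_proper_on_pos[OF subset_refl] prob_nonneg
    by (intro mult_left_mono) (simp_all add: marginal_eq)
  also have "\<dots> = ?m * (1 - 1 / t) * (1 + 4 / t)"
    by (simp only: mult.assoc)
  also have "\<dots> \<le> 1 / real q * (1 + 4 / t)"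
    using marginal_mult_le[OF assms] two_le_t by (intro mult_right_mono) auto
  finally show ?thesis by simp
qed

lemma marginal_ge:
  assumes "v \<in> V" "c \<in> {1..q}"
  shows "1 / real q * (1 - 1 / t) \<le> marginal V E P q v c"
proof -
  let ?A = "{s \<in> \<Omega>. s v = c}" and ?C = "proper_on P {f \<in> E. v \<notin> f}"
  have "(\<Sum>e\<in>{e \<in> E. v \<in> e}. prob (?A \<inter> violated P e \<inter> ?C))
      \<le> (\<Sum>e\<in>{e \<in> E. v \<in> e}. prob ?C / (real q * t * D))"
    using prob_colour_violated_proper_on_le \<open>c \<in> {1..q}\<close> by (intro sum_mono) auto
  also have "\<dots> = real (card {e \<in> E. v \<in> e}) * (prob ?C / (real q * t * D))"
    by simp
  also have "\<dots> \<le> D * (prob ?C / (real q * t * D))"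
    using prob_nonneg q_pos two_le_t one_le_D
    by (intro mult_right_mono[OF card_edges_at_le_D[OF \<open>v \<in> V\<close>]]) simp
  also have "\<dots> = prob ?C / (real q * t)"
    using one_le_D by simp
  finally have "1 / real q * prob ?C - prob ?C / (real q * t) \<le> prob (?A \<inter> proper_on P E)"
    using prob_Int_proper_on_ge[OF determined_by_colour, of v c] prob_colour[OF assms] by simp
  moreover have "1 / real q * (1 - 1 / t) * prob ?C = 1 / real q * prob ?C - prob ?C / (real q * t)"
    by (simp add: algebra_simps)
  moreover have "1 / real q * (1 - 1 / t) * prob (proper_on P E) \<le> 1 / real q * (1 - 1 / t) * prob ?C"
    using two_le_t by (intro mult_left_mono prob_mono proper_on_antimono proper_on_subset) auto
  ultimately have "1 / real q * (1 - 1 / t) * prob (proper_on P E) \<le> prob (?A \<inter> proper_on P E)"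
    by linarith
  then show ?thesis
    using prob_proper_on_pos[OF subset_refl] by (simp add: marginal_eq pos_le_divide_eq)
qed

end

theorem lemma2p5:
  fixes V :: "'v set" and E :: "'v set set" and P :: "'v set \<Rightarrow> nat set"
    and q k k' :: nat and t :: real
  assumes "finite V"
    and "\<forall>e\<in>E. e \<subseteq> V"
    and "\<forall>e\<in>E. P e \<subseteq> {1..q}"
    and "2 \<le> k'" and "k' \<le> k"
    and "\<forall>e\<in>E. k' \<le> card e \<and> card e \<le> k"
    and "real k \<le> t"
    and "real q \<ge> (exp 1 * t * real (max_degree V E)) powr (1 / (real k' - 1))"
    and "v \<in> V" and "c \<in> {1..q}"
  shows "1 / real q * (1 - 1 / t) \<le> marginal V E P q v c
       \<and> marginal V E P q v c \<le> 1 / real q * (1 + 4 / t)"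
proof -
  interpret pinned_hypergraph V q E P k k' t
    using assms by unfold_locales auto
  show ?thesis using marginal_ge marginal_le assms(9,10) by blast
qed

end
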